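(* There exists a countable metrizable precompact abelian topological group which is not $g$-reversible.
   Context: All topological groups are assumed Hausdorff. A topological group $G$ is called $g$-reversible if every continuous automorphism of $G$ (i.e. every continuous group isomorphism of $G$ onto itself) is an open map. A Hausdorff abelian group is precompact if it is a subgroup of a compact Hausdorff group, equivalently for each neighbourhood $U$ of $0$ there is a finite $F$ with $U+F=G$. *)

theory Defs
  imports "HOL-Analysis.Analysis" "HOL-Algebra.Algebra"
begin

definition topological_group :: "('a, 'b) monoid_scheme \<Rightarrow> 'a topology \<Rightarrow> bool" where
  "topological_group M T \<longleftrightarrow>
     group M \<and> topspace T = carrier M \<and> Hausdorff_space T \<and>
     continuous_map (prod_topology T T) T (\<lambda>p. fst p \<otimes>\<^bsub>M\<^esub> snd p) \<and>
     continuous_map T T (\<lambda>x. inv\<^bsub>M\<^esub> x)"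

definition precompact_group :: "('a, 'b) monoid_scheme \<Rightarrow> 'a topology \<Rightarrow> bool" where
  "precompact_group M T \<longleftrightarrow>
     (\<forall>U. U \<subseteq> topspace T \<and> \<one>\<^bsub>M\<^esub> \<in> T interior_of U \<longrightarrow>
        (\<exists>F. finite F \<and> F \<subseteq> carrier M \<and>
             carrier M = {u \<otimes>\<^bsub>M\<^esub> f | u f. u \<in> U \<and> f \<in> F}))"

definition g_reversible :: "('a, 'b) monoid_scheme \<Rightarrow> 'a topology \<Rightarrow> bool" where
  "g_reversible M T \<longleftrightarrow>
     (\<forall>f. f \<in> iso M M \<and> continuous_map T T f \<longrightarrow> open_map T T f)"

end

theory Submission
  imports Defs
begin

text \<open>Read a natural number as the finitely supported 0-1 sequence of its binary digits: under
XOR this is the direct sum of countably many copies of \<open>\<int>/2\<close>, and the metric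
\<open>2\<^sup>-\<^sup>n\<close>, \<open>n\<close> the first bit where two numbers differ, is the restriction of the product
topology of the compact group \<open>(\<int>/2)\<^sup>\<nat>\<close>, so the group is precompact. The Gray code
\<open>x \<mapsto> x XOR \<lfloor>x/2\<rfloor>\<close>, i.e. \<open>(x\<^sub>n + x\<^sub>n\<^sub>+\<^sub>1)\<^sub>n\<close>, is a continuous automorphism, but its inverse
is not continuous: it sends \<open>2\<^sup>m \<longrightarrow> 0\<close> to \<open>2\<^sup>m\<^sup>+\<^sup>1 - 1\<close>, which all have bit 0 set.
Hence the Gray code maps the open set of even numbers onto a set that is not open.\<close>

unbundle bit_operations_syntax

definition first_diff :: "nat \<Rightarrow> nat \<Rightarrow> nat" where
  "first_diff x y = (LEAST n. bit x n \<noteq> bit y n)"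

definition bit_dist :: "nat \<Rightarrow> nat \<Rightarrow> real" where
  "bit_dist x y = (if x = y then 0 else (1/2) ^ first_diff x y)"

lemma take_bit_eq_iff_bits: "take_bit k (x::nat) = take_bit k y \<longleftrightarrow> (\<forall>n<k. bit x n = bit y n)"
  by (auto simp: bit_eq_iff bit_take_bit_iff)

lemma le_first_diff_iff:
  assumes "x \<noteq> y"
  shows "k \<le> first_diff x y \<longleftrightarrow> take_bit k x = take_bit k y"
proof -
  from assms obtain n where "bit x n \<noteq> bit y n"
    using bit_eqI by blast
  then have "bit x (first_diff x y) \<noteq> bit y (first_diff x y)"
    unfolding first_diff_def by (rule LeastI)
  moreover have "bit x n = bit y n" if "n < first_diff x y" for n
    using that not_less_Least unfolding first_diff_def by blast
  ultimately have "k \<le> first_diff x y \<longleftrightarrow> (\<forall>n<k. bit x n = bit y n)"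
    by (metis less_le_trans not_le)
  then show ?thesis
    by (simp add: take_bit_eq_iff_bits)
qed

lemma bit_dist_le_iff: "bit_dist x y \<le> (1/2) ^ k \<longleftrightarrow> take_bit k x = take_bit k y"
  by (cases "x = y") (simp_all add: bit_dist_def power_decreasing_iff le_first_diff_iff)

lemma bit_dist_less_iff: "bit_dist x y < (1/2) ^ k \<longleftrightarrow> take_bit (Suc k) x = take_bit (Suc k) y"
proof (cases "x = y")
  case False
  then have "bit_dist x y < (1/2) ^ k \<longleftrightarrow> Suc k \<le> first_diff x y"
    by (simp add: bit_dist_def power_strict_decreasing_iff Suc_le_eq)
  with False show ?thesis
    by (simp add: le_first_diff_iff)
qed (simp add: bit_dist_def)

lemma bit_dist_ultrametric: "bit_dist x z \<le> max (bit_dist x y) (bit_dist y z)"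
proof (cases "x = y \<or> y = z")
  case False
  define k where "k = min (first_diff x y) (first_diff y z)"
  have "take_bit k x = take_bit k y" "take_bit k y = take_bit k z"
    using False by (simp_all add: k_def flip: le_first_diff_iff)
  then have "bit_dist x z \<le> (1/2) ^ k"
    by (simp add: bit_dist_le_iff)
  also have "\<dots> = max (bit_dist x y) (bit_dist y z)"
    using False by (simp add: k_def bit_dist_def power_decreasing_iff min_def max_def)
  finally show ?thesis .
qed (auto simp: bit_dist_def)

lemma bit_dist_metric: "Metric_space UNIV bit_dist"
proof
  fix x y z :: nat
  show "0 \<le> bit_dist x y" by (simp add: bit_dist_def)
  have "(\<lambda>n. bit x n \<noteq> bit y n) = (\<lambda>n. bit y n \<noteq> bit x n)"
    by auto
  then show "bit_dist x y = bit_dist y x"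
    by (simp add: bit_dist_def first_diff_def)
  show "bit_dist x y = 0 \<longleftrightarrow> x = y" by (simp add: bit_dist_def)
  show "bit_dist x z \<le> bit_dist x y + bit_dist y z"
  proof -
    have "0 \<le> bit_dist x y" "0 \<le> bit_dist y z"
      by (simp_all add: bit_dist_def)
    then show ?thesis
      using bit_dist_ultrametric[of x z y] by linarith
  qed
qed

interpretation bit_space: Metric_space UNIV bit_dist
  by (rule bit_dist_metric)

lemma mball_bit_dist_half_pow:
  "bit_space.mball x ((1/2) ^ k) = {y. take_bit (Suc k) y = take_bit (Suc k) x}"
  by (auto simp: bit_dist_less_iff)

lemma openin_take_bit_class: "openin bit_space.mtopology {y. take_bit k y = take_bit k x}"
  unfolding bit_space.openin_mtopology
proof (intro conjI allI impI)
  fix z assume z: "z \<in> {y. take_bit k y = take_bit k x}"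
  have "take_bit k y = take_bit k x" if "take_bit (Suc k) y = take_bit (Suc k) z" for y
    using take_bit_tightened[OF that, of k] z by simp
  then have "bit_space.mball z ((1/2) ^ k) \<subseteq> {y. take_bit k y = take_bit k x}"
    by (auto simp: mball_bit_dist_half_pow)
  then show "\<exists>r>0. bit_space.mball z r \<subseteq> {y. take_bit k y = take_bit k x}"
    by (intro exI[of _ "(1/2) ^ k"]) simp
qed simp

lemma openin_bit_mtopology_iff:
  "openin bit_space.mtopology U \<longleftrightarrow> (\<forall>x\<in>U. \<exists>k. {y. take_bit k y = take_bit k x} \<subseteq> U)"
proof
  assume U: "openin bit_space.mtopology U"
  show "\<forall>x\<in>U. \<exists>k. {y. take_bit k y = take_bit k x} \<subseteq> U"
  proof
    fix x assume "x \<in> U"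
    then obtain r where "r > 0" "bit_space.mball x r \<subseteq> U"
      using U bit_space.openin_mtopology by blast
    moreover obtain k where "(1/2) ^ k < r"
      using real_arch_pow_inv[of r "1/2"] \<open>r > 0\<close> by auto
    ultimately have "bit_space.mball x ((1/2) ^ k) \<subseteq> U"
      using bit_space.mball_subset_concentric[of "(1/2) ^ k" r x] by simp
    then show "\<exists>k. {y. take_bit k y = take_bit k x} \<subseteq> U"
      by (auto simp: mball_bit_dist_half_pow)
  qed
next
  assume U: "\<forall>x\<in>U. \<exists>k. {y. take_bit k y = take_bit k x} \<subseteq> U"
  show "openin bit_space.mtopology U"
  proof (subst openin_subopen, intro ballI)
    fix x assume "x \<in> U"
    with U obtain k where "{y. take_bit k y = take_bit k x} \<subseteq> U"
      by blast
    then show "\<exists>T. openin bit_space.mtopology T \<and> x \<in> T \<and> T \<subseteq> U"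
      using openin_take_bit_class by blast
  qed
qed

lemma continuous_map_into_bit_mtopology:
  fixes T :: "'a topology" and f :: "'a \<Rightarrow> nat"
  assumes "\<And>x k. x \<in> topspace T \<Longrightarrow>
             \<exists>U. openin T U \<and> x \<in> U \<and> (\<forall>y\<in>U. take_bit k (f y) = take_bit k (f x))"
  shows "continuous_map T bit_space.mtopology f"
  unfolding bit_space.continuous_map_to_metric
proof (intro ballI allI impI)
  fix x and e :: real
  assume "x \<in> topspace T" "e > 0"
  then obtain k where k: "(1/2) ^ k < e"
    using real_arch_pow_inv[of e "1/2"] by auto
  obtain U where "openin T U" "x \<in> U" and U: "\<forall>y\<in>U. take_bit (Suc k) (f y) = take_bit (Suc k) (f x)"
    using assms \<open>x \<in> topspace T\<close> by blast
  moreover have "f y \<in> bit_space.mball (f x) e" if "y \<in> U" for y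
    using U that k bit_space.mball_subset_concentric[of "(1/2) ^ k" e "f x"]
    by (auto simp: mball_bit_dist_half_pow)
  ultimately show "\<exists>U. openin T U \<and> x \<in> U \<and> (\<forall>y\<in>U. f y \<in> bit_space.mball (f x) e)"
    by blast
qed

definition xor_group :: "nat monoid" where
  "xor_group = \<lparr>carrier = UNIV, mult = (XOR), one = 0\<rparr>"

lemma comm_group_xor_group: "comm_group xor_group"
  by (rule comm_groupI) (simp_all add: xor_group_def xor.assoc xor.commute xor.left_commute, metis xor_self_eq)

lemma inv_xor_group [simp]: "inv\<^bsub>xor_group\<^esub> x = x"
proof -
  interpret comm_group xor_group
    by (rule comm_group_xor_group)
  show ?thesis
    by (rule inv_equality) (simp_all add: xor_group_def)
qed

lemma topological_group_xor_group: "topological_group xor_group bit_space.mtopology"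
  unfolding topological_group_def
proof (intro conjI)
  show "group xor_group"
    using comm_group_xor_group by (rule comm_group.axioms(2))
  show "continuous_map bit_space.mtopology bit_space.mtopology (\<lambda>x. inv\<^bsub>xor_group\<^esub> x)"
    by simp
  show "continuous_map (prod_topology bit_space.mtopology bit_space.mtopology) bit_space.mtopology
          (\<lambda>p. fst p \<otimes>\<^bsub>xor_group\<^esub> snd p)"
  proof (rule continuous_map_into_bit_mtopology)
    fix p :: "nat \<times> nat" and k
    let ?U = "{y. take_bit k y = take_bit k (fst p)} \<times> {y. take_bit k y = take_bit k (snd p)}"
    have "openin (prod_topology bit_space.mtopology bit_space.mtopology) ?U"
      by (simp add: openin_prod_Times_iff openin_take_bit_class)
    moreover have "p \<in> ?U"
      by (simp add: mem_Times_iff)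
    moreover have "take_bit k (fst q \<otimes>\<^bsub>xor_group\<^esub> snd q) = take_bit k (fst p \<otimes>\<^bsub>xor_group\<^esub> snd p)"
      if "q \<in> ?U" for q
      using that by (simp add: xor_group_def mem_Times_iff)
    ultimately show "\<exists>U. openin (prod_topology bit_space.mtopology bit_space.mtopology) U \<and> p \<in> U \<and>
        (\<forall>q\<in>U. take_bit k (fst q \<otimes>\<^bsub>xor_group\<^esub> snd q) = take_bit k (fst p \<otimes>\<^bsub>xor_group\<^esub> snd p))"
      by blast
  qed
qed (simp_all add: xor_group_def bit_space.Hausdorff_space_mtopology)

lemma precompact_xor_group: "precompact_group xor_group bit_space.mtopology"
  unfolding precompact_group_def
proof (intro allI impI)
  fix U assume "U \<subseteq> topspace bit_space.mtopology \<and> \<one>\<^bsub>xor_group\<^esub> \<in> bit_space.mtopology interior_of U"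
  then have "0 \<in> bit_space.mtopology interior_of U"
    by (simp add: xor_group_def)
  then obtain k where k: "{y. take_bit k y = 0} \<subseteq> U"
    using openin_bit_mtopology_iff interior_of_subset openin_interior_of by fastforce
  have "x \<in> {u \<otimes>\<^bsub>xor_group\<^esub> f | u f. u \<in> U \<and> f \<in> {..<2 ^ k}}" for x
  proof -
    have "x = (x XOR take_bit k x) \<otimes>\<^bsub>xor_group\<^esub> take_bit k x"
      by (simp add: xor_group_def xor.assoc)
    moreover have "x XOR take_bit k x \<in> U"
      using k by auto
    ultimately show ?thesis
      by (auto intro: take_bit_nat_less_exp)
  qed
  then show "\<exists>F. finite F \<and> F \<subseteq> carrier xor_group \<and>
               carrier xor_group = {u \<otimes>\<^bsub>xor_group\<^esub> f | u f. u \<in> U \<and> f \<in> F}"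
    by (intro exI[of _ "{..<2 ^ k}"]) (auto simp: xor_group_def)
qed

definition gray_code :: "nat \<Rightarrow> nat" where
  "gray_code x = x XOR drop_bit 1 x"

lemma bit_gray_code: "bit (gray_code x) n \<longleftrightarrow> bit x n \<noteq> bit x (Suc n)"
  by (auto simp: gray_code_def bit_xor_iff bit_drop_bit_eq)

lemma gray_code_xor: "gray_code (x XOR y) = gray_code x XOR gray_code y"
  by (rule bit_eqI) (auto simp: bit_gray_code bit_xor_iff)

lemma gray_code_mask: "gray_code (mask (Suc m)) = 2 ^ m"
  by (rule bit_eqI) (auto simp: bit_gray_code bit_mask_iff bit_exp_iff)

lemma take_bit_gray_code_eq:
  "take_bit (Suc k) x = take_bit (Suc k) y \<Longrightarrow> take_bit k (gray_code x) = take_bit k (gray_code y)"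
  by (simp add: take_bit_eq_iff_bits bit_gray_code)

lemma gray_code_less_exp: "x < 2 ^ k \<Longrightarrow> gray_code x < 2 ^ k"
  by (simp add: gray_code_def drop_bit_eq_div)
    (metis take_bit_nat_eq_self_iff take_bit_xor div_le_dividend le_less_trans)

lemma xor_eq_0_iff: "(x::nat) XOR y = 0 \<longleftrightarrow> x = y"
  by (metis xor_self_eq xor.left_neutral xor.assoc)

lemma inj_gray_code: "inj gray_code"
proof (rule injI)
  fix x y assume "gray_code x = gray_code y"
  then have "gray_code (x XOR y) = 0"
    by (simp add: gray_code_xor)
  then have "x XOR y = (x XOR y) div 2"
    by (simp add: gray_code_def drop_bit_eq_div xor_eq_0_iff)
  then have "x XOR y = 0"
    by linarith
  then show "x = y"
    by (simp add: xor_eq_0_iff)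
qed

lemma surj_gray_code: "surj gray_code"
proof -
  have "gray_code ` {..<2 ^ k} = {..<2 ^ k}" for k
    by (rule endo_inj_surj) (auto simp: gray_code_less_exp intro: inj_on_subset[OF inj_gray_code])
  then have "y \<in> range gray_code" for y
    using less_exp[of y] by blast
  then show ?thesis
    by blast
qed

lemma gray_code_iso: "gray_code \<in> iso xor_group xor_group"
  using inj_gray_code surj_gray_code
  by (simp add: iso_def hom_def bij_betw_def xor_group_def gray_code_xor)

lemma continuous_map_gray_code: "continuous_map bit_space.mtopology bit_space.mtopology gray_code"
proof (rule continuous_map_into_bit_mtopology)
  fix x k
  show "\<exists>U. openin bit_space.mtopology U \<and> x \<in> U \<and>
          (\<forall>y\<in>U. take_bit k (gray_code y) = take_bit k (gray_code x))"
  proof (intro exI conjI ballI)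
    show "openin bit_space.mtopology {y. take_bit (Suc k) y = take_bit (Suc k) x}"
      by (rule openin_take_bit_class)
    fix y assume "y \<in> {y. take_bit (Suc k) y = take_bit (Suc k) x}"
    then show "take_bit k (gray_code y) = take_bit k (gray_code x)"
      by (intro take_bit_gray_code_eq) simp
  qed simp
qed

lemma not_openin_gray_code_evens:
  "\<not> openin bit_space.mtopology (gray_code ` {x. take_bit 1 x = 0})"
proof
  assume "openin bit_space.mtopology (gray_code ` {x. take_bit 1 x = 0})"
  moreover have "0 \<in> gray_code ` {x. take_bit 1 x = 0}"
    by (rule image_eqI[of _ _ 0]) (simp_all add: gray_code_def)
  ultimately obtain k where k: "{y. take_bit k y = take_bit k 0} \<subseteq> gray_code ` {x. take_bit 1 x = 0}"
    unfolding openin_bit_mtopology_iff by blast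
  have "2 ^ k \<in> {y. take_bit k y = take_bit k (0::nat)}"
    by simp
  with k have "2 ^ k \<in> gray_code ` {x. take_bit 1 x = 0}"
    by blast
  then obtain x where x: "2 ^ k = gray_code x" and "take_bit 1 x = 0"
    by (rule imageE) simp
  have "x = mask (Suc k)"
    using injD[OF inj_gray_code] x gray_code_mask[of k] by simp
  then have "bit (take_bit 1 x) 0"
    by (simp add: bit_0)
  with \<open>take_bit 1 x = 0\<close> show False
    by simp
qed

lemma not_g_reversible_xor_group: "\<not> g_reversible xor_group bit_space.mtopology"
proof
  assume "g_reversible xor_group bit_space.mtopology"
  then have "open_map bit_space.mtopology bit_space.mtopology gray_code"
    using gray_code_iso continuous_map_gray_code unfolding g_reversible_def by blast
  then have "openin bit_space.mtopology (gray_code ` {x. take_bit 1 x = take_bit 1 0})"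
    using openin_take_bit_class unfolding open_map_def by blast
  then show False
    using not_openin_gray_code_evens by simp
qed

theorem theorem6p5:
  shows "\<exists>(M :: nat monoid) (T :: nat topology).
           comm_group M \<and> topological_group M T \<and> countable (carrier M) \<and>
           metrizable_space T \<and> precompact_group M T \<and> \<not> g_reversible M T"
proof (intro exI conjI)
  show "countable (carrier xor_group)"
    by (simp add: xor_group_def)
qed (rule comm_group_xor_group topological_group_xor_group bit_space.metrizable_space_mtopology
       precompact_xor_group not_g_reversible_xor_group)+

end
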